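(* For every $\Delta\ge 3$, the classes $\mathrm{coLP}[\mathsf{GRAPH}_\Delta]$ and $\mathrm{NLP}[\mathsf{GRAPH}_\Delta]$ are incomparable with respect to inclusion (neither contains the other); in particular $\mathrm{coLP}$ and $\mathrm{NLP}$ are incomparable.
   Context: Graphs. All graphs are finite, nonempty, simple, undirected and connected, and labeled: a graph is a triple $G=(V(G),E(G),\lambda_G)$ with labeling $\lambda_G:V(G)\to\{0,1\}^*$. $\mathsf{GRAPH}$ is the set of all graphs. A graph property is a subset of $\mathsf{GRAPH}$ closed under label-preserving isomorphism; its complement is $\overline P=\mathsf{GRAPH}\setminus P$. For a class $\mathcal C$ of properties and a set $B$ of graphs, $\mathcal C[B]=\{P\cap B : P\in\mathcal C\}$. $N^G_r(u)$ denotes the subgraph of $G$ induced by the nodes at distance at most $r$ from $u$ (with inherited labels). The structural degree of a node $u$ is $\deg(u)+|\lambda_G(u)|$; $\mathsf{GRAPH}_\Delta$ is the set of graphs all of whose nodes have structural degree at most $\Delta$. Identifiers and certificates. An identifier assignment of $G$ is a map $\mathrm{id}:V(G)\to\{0,1\}^*$; it is $r$-locally unique if $\mathrm{id}(u)\neq\mathrm{id}(v)$ for all distinct nodes $u,v$ at distance at most $2r$. Identifiers are ordered lexicographically (a proper prefix is smaller). A certificate assignment is a map $\kappa:V(G)\to\{0,1\}^*$; for $r\in\mathbb N$ and $p:\mathbb N\to\mathbb N$ it is $(r,p)$-bounded (w.r.t. $(G,\mathrm{id})$) if $|\kappa(u)|\le p\big(\sum_{v\in N^G_r(u)}(1+|\lambda_G(v)|+|\mathrm{id}(v)|)\big)$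 for every node $u$. Distributed Turing machines. Such a machine $M$ is a Turing machine with three one-way-infinite tapes (receiving, internal, sending) over the alphabet $\{\vdash,\square,\#,0,1\}$ (left-end marker, blank, separator, bits), with designated states start, pause, stop. It is executed on a graph $G$ under an (at least $1$-locally unique) identifier assignment $\mathrm{id}$ and a certificate assignment $\kappa$: every node runs its own copy of $M$ in synchronous rounds. In each round, a node $u$ whose neighbors are $v_1,\dots,v_d$ in increasing identifier order (i) gets $m_1\#\cdots\#m_d\#$ on its receiving tape, where $m_i$ is the message sent to it by $v_i$ in the previous round (empty in the first round); (ii) its sending tape is emptied, its internal tape is initialized to $\lambda_G(u)\#\mathrm{id}(u)\#\kappa(u)$ in the first round and otherwise keeps its content, and, unless $u$ reached stop in an earlier round, $M$ runs from state start with all heads leftmost until it enters pause or stop; (iii) $u$ sends to $v_i$ the $i$-th $\#$-separated bit string on its sending tape (the empty string if there is none). The execution terminates once all nodes are in stop. The result $M(G,\mathrm{id},\kappa)$ is $G$ relabeled so that each node gets the bit string on its internal tape (other symbols ignored); $G$ is accepted, written $M(G,\mathrm{id},\kappa)\equiv\mathrm{accept}$, if every node's resulting label is the string $1$. A local-polynomial machine is a distributed Turing machine for which there are a constant $c$ and a polynomial $q$ such that, on every graph and under all identifier and certificate assignments, all nodes reach stop within $c$ rounds, and in every round every node makes at most $q(n)$ computation steps, $n$ being the total length of its receiving- and internal-tape contents at the beginning of the round. Classes. $\mathrm{LP}$ is the class of graph properties $P$ for which there are a local-polynomial machine $M$ and a constant $r_{\mathrm{id}}\ge1$ such that for every graph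 $G$ and every $r_{\mathrm{id}}$-locally unique identifier assignment $\mathrm{id}$, $M$ accepts $G$ under $\mathrm{id}$ (with empty certificates) iff $G\in P$. $\mathrm{NLP}$ is the class of graph properties $P$ for which there exist a local-polynomial machine $M$, constants $r_{\mathrm{id}},r\ge 1$ and a polynomial $p$ such that for every graph $G$ and every $r_{\mathrm{id}}$-locally unique identifier assignment $\mathrm{id}$ of $G$: $G\in P\iff\exists\kappa\,:\,M(G,\mathrm{id},\kappa)\equiv\mathrm{accept}$, $\kappa$ ranging over $(r,p)$-bounded certificate assignments of $(G,\mathrm{id})$. $\mathrm{coLP}=\{\overline P:P\in\mathrm{LP}\}$. *)

theory Defs
  imports "HOL-Computational_Algebra.Polynomial"
begin

section \<open>Labeled graphs\<close>

text \<open>Nodes are natural numbers (every finite graph is isomorphic to one of this form,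
and all properties considered are closed under isomorphism).  Edges are a symmetric,
irreflexive relation on the node set; labels outside the node set are fixed to the empty
string so that a graph has a canonical representation.\<close>

record lgraph =
  V :: "nat set"
  E :: "(nat \<times> nat) set"
  lab :: "nat \<Rightarrow> bool list"

fun dist_le :: "lgraph \<Rightarrow> nat \<Rightarrow> nat \<Rightarrow> nat \<Rightarrow> bool" where
  "dist_le G 0 u v \<longleftrightarrow> u = v \<and> u \<in> V G"
| "dist_le G (Suc k) u v \<longleftrightarrow> dist_le G k u v \<or> (\<exists>w. dist_le G k u w \<and> (w, v) \<in> E G)"

definition is_graph :: "lgraph \<Rightarrow> bool" where
  "is_graph G \<longleftrightarrow> finite (V G) \<and> V G \<noteq> {} \<and> E G \<subseteq> V G \<times> V G
     \<and> (\<forall>u v. (u, v) \<in> E G \<longrightarrow> (v, u) \<in> E G) \<and> (\<forall>u. (u, u) \<notin> E G)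
     \<and> (\<forall>v. v \<notin> V G \<longrightarrow> lab G v = [])
     \<and> (\<forall>u\<in>V G. \<forall>v\<in>V G. \<exists>k. dist_le G k u v)"

definition GRAPH :: "lgraph set" where
  "GRAPH = {G. is_graph G}"

definition graph_iso :: "lgraph \<Rightarrow> lgraph \<Rightarrow> bool" where
  "graph_iso G H \<longleftrightarrow> (\<exists>f. bij_betw f (V G) (V H)
      \<and> (\<forall>u\<in>V G. \<forall>v\<in>V G. (u, v) \<in> E G \<longleftrightarrow> (f u, f v) \<in> E H)
      \<and> (\<forall>u\<in>V G. lab H (f u) = lab G u))"

definition graph_property :: "lgraph set \<Rightarrow> bool" where
  "graph_property P \<longleftrightarrow> P \<subseteq> GRAPH \<and> (\<forall>G\<in>P. \<forall>H\<in>GRAPH. graph_iso G H \<longrightarrow> H \<in> P)"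

definition nbrs :: "lgraph \<Rightarrow> nat \<Rightarrow> nat set" where
  "nbrs G u = {v. (u, v) \<in> E G}"

definition GRAPH_deg :: "nat \<Rightarrow> lgraph set" where
  "GRAPH_deg D = {G \<in> GRAPH. \<forall>u\<in>V G. card (nbrs G u) + length (lab G u) \<le> D}"

definition restrict_class :: "lgraph set set \<Rightarrow> lgraph set \<Rightarrow> lgraph set set" where
  "restrict_class C B = {P \<inter> B | P. P \<in> C}"

section \<open>Identifiers and certificates\<close>

definition loc_unique :: "lgraph \<Rightarrow> nat \<Rightarrow> (nat \<Rightarrow> bool list) \<Rightarrow> bool" where
  "loc_unique G r ident \<longleftrightarrow>
     (\<forall>u\<in>V G. \<forall>v\<in>V G. u \<noteq> v \<and> dist_le G (2 * r) u v \<longrightarrow> ident u \<noteq> ident v)"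

text \<open>Lexicographic order on bit strings (0 < 1, a proper prefix is smaller).\<close>
definition id_less :: "bool list \<Rightarrow> bool list \<Rightarrow> bool" where
  "id_less a b \<longleftrightarrow> (a, b) \<in> lexord {(x, y). x < y}"

definition bounded_cert :: "lgraph \<Rightarrow> (nat \<Rightarrow> bool list) \<Rightarrow> nat \<Rightarrow> nat poly
     \<Rightarrow> (nat \<Rightarrow> bool list) \<Rightarrow> bool" where
  "bounded_cert G ident r p \<kappa> \<longleftrightarrow>
     (\<forall>u\<in>V G. length (\<kappa> u) \<le>
        poly p (\<Sum>v\<in>{v. dist_le G r u v}. 1 + length (lab G v) + length (ident v)))"

section \<open>Distributed Turing machines\<close>

datatype tsym = LEnd | Blank | Sep | Zero | One
datatype move = MoveL | MoveR | MoveS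

record dtm =
  Q :: "nat set"
  delta :: "nat \<Rightarrow> tsym \<Rightarrow> tsym \<Rightarrow> tsym \<Rightarrow> nat \<times> (tsym \<times> tsym \<times> tsym) \<times> (move \<times> move \<times> move)"
  q_start :: nat
  q_pause :: nat
  q_stop :: nat

definition wf_dtm :: "dtm \<Rightarrow> bool" where
  "wf_dtm M \<longleftrightarrow> finite (Q M) \<and> q_start M \<in> Q M \<and> q_pause M \<in> Q M \<and> q_stop M \<in> Q M
     \<and> q_start M \<noteq> q_pause M \<and> q_start M \<noteq> q_stop M \<and> q_pause M \<noteq> q_stop M
     \<and> (\<forall>q\<in>Q M. \<forall>a b c. fst (delta M q a b c) \<in> Q M)"

text \<open>A tape is the list of cells 1,2,...; cell 0 permanently holds the left-end marker;
cells beyond the list are blank.\<close>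
definition tread :: "tsym list \<Rightarrow> nat \<Rightarrow> tsym" where
  "tread t i = (if i = 0 then LEnd else if i \<le> length t then t ! (i - 1) else Blank)"

definition twrite :: "tsym list \<Rightarrow> nat \<Rightarrow> tsym \<Rightarrow> tsym list" where
  "twrite t i a = (if i = 0 then t else (t @ replicate (i - length t) Blank)[i - 1 := a])"

definition hmove :: "move \<Rightarrow> nat \<Rightarrow> nat" where
  "hmove m i = (case m of MoveL \<Rightarrow> i - 1 | MoveR \<Rightarrow> Suc i | MoveS \<Rightarrow> i)"

record cfg =
  cst :: nat
  rtape :: "tsym list"
  itape :: "tsym list"
  stape :: "tsym list"
  rhd :: nat
  ihd :: nat
  shd :: nat

definition halted :: "dtm \<Rightarrow> cfg \<Rightarrow> bool" where
  "halted M c \<longleftrightarrow> cst c = q_pause M \<or> cst c = q_stop M"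

definition tm_step :: "dtm \<Rightarrow> cfg \<Rightarrow> cfg" where
  "tm_step M c = (if halted M c then c else
     (case delta M (cst c) (tread (rtape c) (rhd c)) (tread (itape c) (ihd c)) (tread (stape c) (shd c)) of
       (q', (a1, a2, a3), (m1, m2, m3)) \<Rightarrow>
         \<lparr>cst = q', rtape = twrite (rtape c) (rhd c) a1, itape = twrite (itape c) (ihd c) a2,
          stape = twrite (stape c) (shd c) a3,
          rhd = hmove m1 (rhd c), ihd = hmove m2 (ihd c), shd = hmove m3 (shd c)\<rparr>))"

definition tm_steps :: "dtm \<Rightarrow> nat \<Rightarrow> cfg \<Rightarrow> cfg" where
  "tm_steps M n c = (tm_step M ^^ n) c"

definition tm_run :: "dtm \<Rightarrow> cfg \<Rightarrow> cfg option" where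
  "tm_run M c = (if \<exists>n. halted M (tm_steps M n c)
      then Some (tm_steps M (LEAST n. halted M (tm_steps M n c)) c) else None)"

definition round_cfg :: "dtm \<Rightarrow> tsym list \<Rightarrow> tsym list \<Rightarrow> cfg" where
  "round_cfg M r i = \<lparr>cst = q_start M, rtape = r, itape = i, stape = [], rhd = 0, ihd = 0, shd = 0\<rparr>"

definition tcontent :: "tsym list \<Rightarrow> tsym list" where
  "tcontent t = rev (dropWhile (\<lambda>x. x = Blank) (rev t))"

fun splitsep :: "tsym list \<Rightarrow> tsym list list" where
  "splitsep [] = [[]]"
| "splitsep (x # xs) = (if x = Sep then [] # splitsep xs
      else (let r = splitsep xs in (x # hd r) # tl r))"

definition bitsof :: "tsym list \<Rightarrow> bool list" where
  "bitsof s = concat (map (\<lambda>x. case x of Zero \<Rightarrow> [False] | One \<Rightarrow> [True] | _ \<Rightarrow> []) s)"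

definition enc :: "bool list \<Rightarrow> tsym list" where
  "enc b = map (\<lambda>x. if x then One else Zero) b"

definition piece :: "tsym list \<Rightarrow> nat \<Rightarrow> bool list" where
  "piece t i = (let ps = splitsep (tcontent t) in if i < length ps then bitsof (ps ! i) else [])"

definition nbr_list :: "lgraph \<Rightarrow> (nat \<Rightarrow> bool list) \<Rightarrow> nat \<Rightarrow> nat list" where
  "nbr_list G ident u = (THE vs. set vs = nbrs G u \<and> sorted_wrt (\<lambda>a b. id_less (ident a) (ident b)) vs)"

definition nbr_index :: "lgraph \<Rightarrow> (nat \<Rightarrow> bool list) \<Rightarrow> nat \<Rightarrow> nat \<Rightarrow> nat" where
  "nbr_index G ident v u = (THE j. j < length (nbr_list G ident v) \<and> nbr_list G ident v ! j = u)"

record nstate =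
  n_int :: "tsym list"
  n_send :: "tsym list"
  n_stopped :: bool

text \<open>Message sent by v to u (computed from v's sending tape in the previous round).\<close>
definition message :: "lgraph \<Rightarrow> (nat \<Rightarrow> bool list) \<Rightarrow> (nat \<Rightarrow> nstate) \<Rightarrow> nat \<Rightarrow> nat \<Rightarrow> bool list" where
  "message G ident s v u = piece (n_send (s v)) (nbr_index G ident v u)"

definition received :: "lgraph \<Rightarrow> (nat \<Rightarrow> bool list) \<Rightarrow> (nat \<Rightarrow> nstate) \<Rightarrow> nat \<Rightarrow> tsym list" where
  "received G ident s u = concat (map (\<lambda>v. enc (message G ident s v u) @ [Sep]) (nbr_list G ident u))"

definition init_state :: "lgraph \<Rightarrow> (nat \<Rightarrow> bool list) \<Rightarrow> (nat \<Rightarrow> bool list) \<Rightarrow> nat \<Rightarrow> nstate" where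
  "init_state G ident \<kappa> u =
     \<lparr>n_int = enc (lab G u) @ [Sep] @ enc (ident u) @ [Sep] @ enc (\<kappa> u), n_send = [], n_stopped = False\<rparr>"

definition node_round :: "dtm \<Rightarrow> lgraph \<Rightarrow> (nat \<Rightarrow> bool list) \<Rightarrow> (nat \<Rightarrow> nstate) \<Rightarrow> nat \<Rightarrow> nstate option" where
  "node_round M G ident s u =
     (if n_stopped (s u) then Some \<lparr>n_int = n_int (s u), n_send = [], n_stopped = True\<rparr>
      else (case tm_run M (round_cfg M (received G ident s u) (n_int (s u))) of
              None \<Rightarrow> None
            | Some c \<Rightarrow> Some \<lparr>n_int = itape c, n_send = stape c, n_stopped = (cst c = q_stop M)\<rparr>))"

definition do_round :: "dtm \<Rightarrow> lgraph \<Rightarrow> (nat \<Rightarrow> bool list) \<Rightarrow> (nat \<Rightarrow> nstate) \<Rightarrow> (nat \<Rightarrow> nstate) option" where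
  "do_round M G ident s =
     (if \<forall>u\<in>V G. node_round M G ident s u \<noteq> None
      then Some (\<lambda>u. if u \<in> V G then the (node_round M G ident s u) else s u) else None)"

fun exec :: "dtm \<Rightarrow> lgraph \<Rightarrow> (nat \<Rightarrow> bool list) \<Rightarrow> (nat \<Rightarrow> bool list) \<Rightarrow> nat \<Rightarrow> (nat \<Rightarrow> nstate) option" where
  "exec M G ident \<kappa> 0 = Some (init_state G ident \<kappa>)"
| "exec M G ident \<kappa> (Suc k) = (case exec M G ident \<kappa> k of None \<Rightarrow> None | Some s \<Rightarrow> do_round M G ident s)"

text \<open>M(G,id,kappa) = accept: the execution terminates and every node's resulting label is 1.\<close>
definition accepts :: "dtm \<Rightarrow> lgraph \<Rightarrow> (nat \<Rightarrow> bool list) \<Rightarrow> (nat \<Rightarrow> bool list) \<Rightarrow> bool" where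
  "accepts M G ident \<kappa> \<longleftrightarrow> (\<exists>k s. exec M G ident \<kappa> k = Some s \<and> (\<forall>u\<in>V G. n_stopped (s u))
      \<and> (\<forall>u\<in>V G. bitsof (n_int (s u)) = [True]))"

definition local_poly :: "dtm \<Rightarrow> bool" where
  "local_poly M \<longleftrightarrow> wf_dtm M \<and> (\<exists>c (q :: nat poly). \<forall>G\<in>GRAPH. \<forall>ident \<kappa>. loc_unique G 1 ident \<longrightarrow>
      (\<forall>k<c. \<exists>s. exec M G ident \<kappa> k = Some s \<and>
         (\<forall>u\<in>V G. \<not> n_stopped (s u) \<longrightarrow>
            (\<exists>n \<le> poly q (length (tcontent (received G ident s u)) + length (tcontent (n_int (s u)))).
               halted M (tm_steps M n (round_cfg M (received G ident s u) (n_int (s u)))))))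
      \<and> (\<exists>s. exec M G ident \<kappa> c = Some s \<and> (\<forall>u\<in>V G. n_stopped (s u))))"

definition LP :: "lgraph set set" where
  "LP = {P. graph_property P \<and> (\<exists>M r_id. local_poly M \<and> r_id \<ge> 1 \<and>
      (\<forall>G\<in>GRAPH. \<forall>ident. loc_unique G r_id ident \<longrightarrow> (accepts M G ident (\<lambda>_. []) \<longleftrightarrow> G \<in> P)))}"

definition NLP :: "lgraph set set" where
  "NLP = {P. graph_property P \<and> (\<exists>M r_id r (p :: nat poly). local_poly M \<and> r_id \<ge> 1 \<and> r \<ge> 1 \<and>
      (\<forall>G\<in>GRAPH. \<forall>ident. loc_unique G r_id ident \<longrightarrow>
         (G \<in> P \<longleftrightarrow> (\<exists>\<kappa>. bounded_cert G ident r p \<kappa> \<and> accepts M G ident \<kappa>))))}"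

definition coLP :: "lgraph set set" where
  "coLP = {GRAPH - P | P. P \<in> LP}"

end

theory Submission
  imports Defs "HOL-Library.List_Lexorder"
begin

text \<open>
  Let A be the property that all labels are empty and B its complement.  A node sees its own
  label, so A is in LP, hence B is in coLP, and A is in NLP.  No property in NLP agrees with B on
  graphs of degree at most 3: on a long cycle with a single nonempty label and identifiers
  periodic modulo m, the certificates have length bounded independently of the cycle length, so
  by pigeonhole two windows of certificates around positions divisible by m coincide.  Cutting
  out the stretch between them yields a short cycle with all labels empty on which every node
  has the same view of constant radius as its counterpart on the long cycle, so the verifier
  still accepts it although it is not in B.  As LP is contained in NLP, the complement of an
  LP property agreeing with A would be such an NLP property as well.
\<close>

section \<open>Runs of distributed machines\<close>

lemma tm_steps_halted: "halted M c \<Longrightarrow> tm_steps M n c = c"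
  by (induction n) (auto simp: tm_steps_def tm_step_def)

lemma tm_steps_add: "tm_steps M (m + n) c = tm_steps M m (tm_steps M n c)"
  by (simp add: tm_steps_def funpow_add)

lemma tm_steps_Suc: "tm_steps M (Suc n) c = tm_steps M n (tm_step M c)"
  by (simp add: tm_steps_def funpow_Suc_right del: funpow.simps)

lemma tm_run_eq_if_halted:
  assumes "halted M (tm_steps M n c)"
  shows "tm_run M c = Some (tm_steps M n c)"
proof -
  let ?l = "LEAST n. halted M (tm_steps M n c)"
  have "halted M (tm_steps M ?l c)" and "?l \<le> n"
    using assms by (auto intro: LeastI Least_le)
  then have "tm_steps M n c = tm_steps M ?l c"
    using tm_steps_add[of M "n - ?l" ?l c] by (simp add: tm_steps_halted)
  then show ?thesis
    using assms by (auto simp: tm_run_def)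
qed

lemma exec_stopped_stable:
  assumes "exec M G i \<kappa> a = Some s" "\<forall>u\<in>V G. n_stopped (s u)"
  shows "\<exists>s'. exec M G i \<kappa> (a + j) = Some s' \<and> (\<forall>u\<in>V G. n_stopped (s' u) \<and> n_int (s' u) = n_int (s u))"
proof (induction j)
  case 0
  then show ?case using assms by auto
next
  case (Suc j)
  then obtain s' where s': "exec M G i \<kappa> (a + j) = Some s'"
    "\<forall>u\<in>V G. n_stopped (s' u) \<and> n_int (s' u) = n_int (s u)" by blast
  have "\<forall>u\<in>V G. node_round M G i s' u = Some \<lparr>n_int = n_int (s' u), n_send = [], n_stopped = True\<rparr>"
    using s'(2) by (simp add: node_round_def)
  then show ?case
    using s' by (auto simp: do_round_def)
qed

lemma accepts_stopped_round:
  assumes "accepts M G i \<kappa>" "exec M G i \<kappa> c = Some s" "\<forall>u\<in>V G. n_stopped (s u)"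
  shows "\<forall>u\<in>V G. bitsof (n_int (s u)) = [True]"
proof -
  obtain k sk where k: "exec M G i \<kappa> k = Some sk" "\<forall>u\<in>V G. n_stopped (sk u)"
    "\<forall>u\<in>V G. bitsof (n_int (sk u)) = [True]"
    using assms(1) by (auto simp: accepts_def)
  show ?thesis
  proof (cases "k \<le> c")
    case True
    then show ?thesis
      using exec_stopped_stable[OF k(1,2), of "c - k"] assms(2) k(3) by auto
  next
    case False
    then show ?thesis
      using exec_stopped_stable[OF assms(2,3), of "k - c"] k by auto
  qed
qed

lemma local_poly_stops:
  assumes "local_poly M"
  obtains c where "\<And>G i \<kappa>. G \<in> GRAPH \<Longrightarrow> loc_unique G 1 i \<Longrightarrow>
      \<exists>s. exec M G i \<kappa> c = Some s \<and> (\<forall>u\<in>V G. n_stopped (s u))"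
  using assms unfolding local_poly_def by blast

section \<open>Checking the own label\<close>

text \<open>State 0 steps onto the first internal cell, which holds the separator exactly when the
  label is empty; state 3 overwrites it with the answer bit, state 4 blanks the rest of the
  internal tape so that the answer bit is the only bit left on it, and state 2 stops.\<close>

definition empty_label_delta ::
    "nat \<Rightarrow> tsym \<Rightarrow> tsym \<Rightarrow> tsym \<Rightarrow> nat \<times> (tsym \<times> tsym \<times> tsym) \<times> (move \<times> move \<times> move)" where
  "empty_label_delta q a b c =
    (if q = 0 then (3, (a, b, c), (MoveS, MoveR, MoveS))
     else if q = 3 then (4, (a, if b = Sep then One else Zero, c), (MoveS, MoveR, MoveS))
     else if q = 4 then (if b = Blank then (2, (a, b, c), (MoveS, MoveS, MoveS))
                         else (4, (a, Blank, c), (MoveS, MoveR, MoveS)))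
     else (2, (a, b, c), (MoveS, MoveS, MoveS)))"

definition empty_label_tm :: dtm where
  "empty_label_tm = \<lparr>Q = {0,1,2,3,4}, delta = empty_label_delta, q_start = 0, q_pause = 1, q_stop = 2\<rparr>"

lemma wf_empty_label_tm: "wf_dtm empty_label_tm"
  by (auto simp: wf_dtm_def empty_label_tm_def empty_label_delta_def)

definition erasing_cfg :: "tsym list \<Rightarrow> tsym \<Rightarrow> tsym list \<Rightarrow> nat \<Rightarrow> cfg" where
  "erasing_cfg R x T j = \<lparr>cst = 4, rtape = R, itape = x # replicate j Blank @ drop (j + 1) T,
      stape = [], rhd = 0, ihd = j + 2, shd = 0\<rparr>"

definition erased_cfg :: "tsym list \<Rightarrow> tsym \<Rightarrow> tsym list \<Rightarrow> cfg" where
  "erased_cfg R x T = \<lparr>cst = 2, rtape = R, itape = x # replicate (length T) Blank, stape = [],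
      rhd = 0, ihd = length T + 1, shd = 0\<rparr>"

lemma erasing_cfg_step:
  assumes nb: "Blank \<notin> set T" and j: "j + 1 < length T"
  shows "tm_step empty_label_tm (erasing_cfg R x T j) = erasing_cfg R x T (Suc j)"
proof -
  have T: "drop (Suc j) T = T ! Suc j # drop (Suc (Suc j)) T"
    using j by (simp add: Cons_nth_drop_Suc)
  have "T ! Suc j \<noteq> Blank"
    using nb j by (metis Suc_eq_plus1 nth_mem)
  then show ?thesis
    using j by (simp add: T tm_step_def erasing_cfg_def halted_def empty_label_tm_def
        empty_label_delta_def tread_def twrite_def hmove_def nth_append list_update_append
        replicate_append_same[symmetric])
qed

lemma erasing_cfg_steps:
  assumes "Blank \<notin> set T" "j + d + 1 = length T"
  shows "tm_steps empty_label_tm d (erasing_cfg R x T j) = erasing_cfg R x T (j + d)"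
  using assms(2)
proof (induction d arbitrary: j)
  case 0
  then show ?case by (simp add: tm_steps_def)
next
  case (Suc d)
  then show ?case
    using erasing_cfg_step[OF assms(1), of j] Suc.IH[of "Suc j"] by (simp add: tm_steps_Suc)
qed

lemma empty_label_tm_run:
  assumes nb: "Blank \<notin> set T" and ne: "T \<noteq> []"
  shows "tm_steps empty_label_tm (length T + 2) (round_cfg empty_label_tm R T)
       = erased_cfg R (if hd T = Sep then One else Zero) T"
proof -
  let ?x = "if hd T = Sep then One else Zero"
  obtain k where k: "length T = Suc k" using ne by (cases T) auto
  have start: "tm_steps empty_label_tm 2 (round_cfg empty_label_tm R T) = erasing_cfg R ?x T 0"
    using ne by (cases T) (simp_all add: numeral_2_eq_2 tm_steps_def tm_step_def round_cfg_def
        erasing_cfg_def halted_def empty_label_tm_def empty_label_delta_def tread_def twrite_def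
        hmove_def)
  have final: "tm_step empty_label_tm (erasing_cfg R ?x T k) = erased_cfg R ?x T"
    using k by (simp add: tm_step_def erasing_cfg_def erased_cfg_def halted_def empty_label_tm_def
        empty_label_delta_def tread_def twrite_def hmove_def list_update_append)
      (simp add: replicate_append_same)
  have "length T + 2 = 1 + (k + 2)" using k by simp
  then have "tm_steps empty_label_tm (length T + 2) (round_cfg empty_label_tm R T)
      = tm_steps empty_label_tm 1 (tm_steps empty_label_tm k (erasing_cfg R ?x T 0))"
    by (simp only: tm_steps_add start)
  also have "\<dots> = tm_steps empty_label_tm 1 (erasing_cfg R ?x T k)"
    using erasing_cfg_steps[OF nb, of 0 k] k by simp
  also have "\<dots> = erased_cfg R ?x T"
    using final by (simp add: tm_steps_def)
  finally show ?thesis .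
qed

lemma hd_enc_Sep: "hd (enc b @ Sep # t) = Sep \<longleftrightarrow> b = []"
  by (cases b) (simp_all add: enc_def)

lemma init_tape_nonblank:
  "Blank \<notin> set (n_int (init_state G i \<kappa> u))" "n_int (init_state G i \<kappa> u) \<noteq> []"
  by (auto simp: init_state_def enc_def)

lemma hd_init_tape: "hd (n_int (init_state G i \<kappa> u)) = Sep \<longleftrightarrow> lab G u = []"
  by (simp add: init_state_def hd_enc_Sep)

definition checked_state :: "lgraph \<Rightarrow> (nat \<Rightarrow> bool list) \<Rightarrow> (nat \<Rightarrow> bool list) \<Rightarrow> nat \<Rightarrow> nstate" where
  "checked_state G i \<kappa> u =
     \<lparr>n_int = (if lab G u = [] then One else Zero) # replicate (length (n_int (init_state G i \<kappa> u))) Blank,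
      n_send = [], n_stopped = True\<rparr>"

lemma empty_label_tm_halts:
  "halted empty_label_tm (tm_steps empty_label_tm (length (n_int (init_state G i \<kappa> u)) + 2)
     (round_cfg empty_label_tm R (n_int (init_state G i \<kappa> u))))"
  by (simp only: empty_label_tm_run[OF init_tape_nonblank(1,2)])
    (simp add: halted_def erased_cfg_def empty_label_tm_def)

lemma exec_empty_label_tm:
  "exec empty_label_tm G i \<kappa> 1 =
     Some (\<lambda>u. if u \<in> V G then checked_state G i \<kappa> u else init_state G i \<kappa> u)"
proof -
  have "tm_run empty_label_tm (round_cfg empty_label_tm R (n_int (init_state G i \<kappa> u)))
      = Some (erased_cfg R (if lab G u = [] then One else Zero) (n_int (init_state G i \<kappa> u)))" for R u
    using tm_run_eq_if_halted[OF empty_label_tm_halts]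
    by (simp only: empty_label_tm_run[OF init_tape_nonblank(1,2)] hd_init_tape)
  moreover have "\<not> n_stopped (init_state G i \<kappa> u)" for u
    by (simp add: init_state_def)
  ultimately have round: "node_round empty_label_tm G i (init_state G i \<kappa>) u = Some (checked_state G i \<kappa> u)" for u
    by (simp add: node_round_def checked_state_def erased_cfg_def empty_label_tm_def)
  show ?thesis
    by (simp add: do_round_def fun_eq_iff round)
qed

lemma checked_state_stopped: "n_stopped (checked_state G i \<kappa> u)"
  by (simp add: checked_state_def)

lemma bitsof_checked_state: "bitsof (n_int (checked_state G i \<kappa> u)) = [True] \<longleftrightarrow> lab G u = []"
proof -
  have "bitsof (x # replicate n Blank) = bitsof [x]" for x n
    by (induction n) (auto simp: bitsof_def)
  then show ?thesis
    by (simp add: checked_state_def bitsof_def)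
qed

lemma accepts_empty_label_tm: "accepts empty_label_tm G i \<kappa> \<longleftrightarrow> (\<forall>u\<in>V G. lab G u = [])"
proof
  assume "accepts empty_label_tm G i \<kappa>"
  then show "\<forall>u\<in>V G. lab G u = []"
    using accepts_stopped_round[OF _ exec_empty_label_tm] by (simp add: checked_state_stopped bitsof_checked_state)
next
  assume "\<forall>u\<in>V G. lab G u = []"
  then show "accepts empty_label_tm G i \<kappa>"
    using exec_empty_label_tm unfolding accepts_def
    by (intro exI[of _ 1]) (simp add: checked_state_stopped bitsof_checked_state)
qed

lemma tcontent_nonblank: "Blank \<notin> set t \<Longrightarrow> tcontent t = t"
  by (simp add: tcontent_def dropWhile_eq_self_iff) (cases "rev t"; auto)

lemma empty_label_tm_halts_within:
  "\<exists>n \<le> poly [:2, 1:] (length (tcontent R) + length (tcontent (n_int (init_state G i \<kappa> u)))).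
     halted empty_label_tm (tm_steps empty_label_tm n (round_cfg empty_label_tm R (n_int (init_state G i \<kappa> u))))"
  by (rule exI[of _ "length (n_int (init_state G i \<kappa> u)) + 2"])
    (simp add: tcontent_nonblank init_tape_nonblank empty_label_tm_halts[simplified])

lemma local_poly_empty_label_tm: "local_poly empty_label_tm"
  unfolding local_poly_def
  using wf_empty_label_tm empty_label_tm_halts_within
  by (intro conjI exI[of _ "1::nat"] exI[of _ "[:2, 1:]"] ballI allI impI)
    (auto simp del: exec.simps simp: exec.simps(1) exec_empty_label_tm[unfolded One_nat_def]
        checked_state_stopped)

section \<open>Views of bounded radius\<close>

lemma id_less_iff: "id_less a b \<longleftrightarrow> a < b"
  by (simp add: id_less_def list_less_def)

lemma sorted_id_iff: "sorted_wrt (\<lambda>a b. id_less (i a) (i b)) L \<longleftrightarrow> sorted_wrt (<) (map i L)"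
  by (simp add: sorted_wrt_map id_less_iff)

lemma sorted_by_ids_unique:
  assumes "inj_on i S" "set vs = S" "set ws = S"
    "sorted_wrt (\<lambda>a b. id_less (i a) (i b)) vs" "sorted_wrt (\<lambda>a b. id_less (i a) (i b)) ws"
  shows "vs = ws"
proof -
  have "map i vs = map i ws"
    using assms by (intro strict_sorted_equal) (auto simp: sorted_id_iff)
  then show ?thesis using assms(1-3) by (simp add: inj_on_map_eq_map)
qed

lemma sorted_by_ids_exists:
  assumes "finite S" "inj_on i S"
  shows "\<exists>vs. set vs = S \<and> sorted_wrt (\<lambda>a b. id_less (i a) (i b)) vs"
proof -
  let ?ws = "sorted_list_of_set (i ` S)"
  let ?vs = "map (the_inv_into S i) ?ws"
  have sw: "set ?ws = i ` S" using assms by simp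
  have mv: "map i ?vs = ?ws" using sw assms(2)
    by (auto simp: map_idI f_the_inv_into_f intro!: map_idI)
  have "set ?vs = S" using sw assms(2) by (auto simp: the_inv_into_f_f image_image)
  moreover have "sorted_wrt (\<lambda>a b. id_less (i a) (i b)) ?vs"
    unfolding sorted_id_iff mv by (rule strict_sorted_list_of_set)
  ultimately show ?thesis by blast
qed

lemma nbr_list_props:
  assumes "finite (nbrs G u)" "inj_on i (nbrs G u)"
  shows "set (nbr_list G i u) = nbrs G u \<and> sorted_wrt (\<lambda>a b. id_less (i a) (i b)) (nbr_list G i u)"
proof -
  obtain vs where vs: "set vs = nbrs G u \<and> sorted_wrt (\<lambda>a b. id_less (i a) (i b)) vs"
    using sorted_by_ids_exists[OF assms] by blast
  show ?thesis unfolding nbr_list_def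
    by (rule theI[of _ vs]) (use vs sorted_by_ids_unique[OF assms(2)] in blast)+
qed

lemma nbr_list_eq:
  assumes "finite (nbrs G u)" "inj_on i (nbrs G u)" "set vs = nbrs G u"
    "sorted_wrt (\<lambda>a b. id_less (i a) (i b)) vs"
  shows "nbr_list G i u = vs"
  using nbr_list_props[OF assms(1,2)] sorted_by_ids_unique[OF assms(2)] assms(3,4) by blast

lemma finite_nbrs: "is_graph G \<Longrightarrow> finite (nbrs G u)"
  unfolding is_graph_def nbrs_def by (auto intro: finite_subset)

lemma nbrs_sym: "is_graph G \<Longrightarrow> v \<in> nbrs G u \<Longrightarrow> u \<in> nbrs G v"
  unfolding is_graph_def nbrs_def by auto

lemma nbrs_in_V: "is_graph G \<Longrightarrow> v \<in> nbrs G u \<Longrightarrow> v \<in> V G \<and> u \<in> V G"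
  unfolding is_graph_def nbrs_def by auto

lemma dist_le_mono: "dist_le G k u v \<Longrightarrow> k \<le> k' \<Longrightarrow> dist_le G k' u v"
proof (induction k' arbitrary: k)
  case 0 then show ?case by auto
next
  case (Suc k') then show ?case by (cases "k = Suc k'") auto
qed

lemma loc_unique_mono: "loc_unique G r i \<Longrightarrow> r' \<le> r \<Longrightarrow> loc_unique G r' i"
  unfolding loc_unique_def using dist_le_mono[of G "2 * r'" _ _ "2 * r"] by fastforce

lemma inj_on_nbrs:
  assumes "is_graph G" "loc_unique G 1 i"
  shows "inj_on i (nbrs G u)"
proof (rule inj_onI)
  fix a b assume ab: "a \<in> nbrs G u" "b \<in> nbrs G u" "i a = i b"
  show "a = b"
  proof (rule ccontr)
    assume "a \<noteq> b"
    have "(a, u) \<in> E G" "(u, b) \<in> E G" using ab nbrs_sym[OF assms(1)] by (auto simp: nbrs_def)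
    moreover have "a \<in> V G" "b \<in> V G" using ab nbrs_in_V[OF assms(1)] by auto
    ultimately have "dist_le G 2 a b" by (auto simp: numeral_2_eq_2)
    then show False using assms(2) ab \<open>a \<noteq> b\<close> \<open>a \<in> V G\<close> \<open>b \<in> V G\<close>
      unfolding loc_unique_def by auto
  qed
qed

text \<open>Depth-k unfoldings of the neighbourhoods of x in G1 and of y in G2 are isomorphic,
  including labels, identifiers and certificates: this is everything a node can learn in k rounds.\<close>

fun same_view :: "lgraph \<Rightarrow> (nat \<Rightarrow> bool list) \<Rightarrow> (nat \<Rightarrow> bool list) \<Rightarrow> lgraph \<Rightarrow> (nat \<Rightarrow> bool list)
    \<Rightarrow> (nat \<Rightarrow> bool list) \<Rightarrow> nat \<Rightarrow> nat \<Rightarrow> nat \<Rightarrow> bool" where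
  "same_view G1 i1 k1 G2 i2 k2 0 x y \<longleftrightarrow> x \<in> V G1 \<and> y \<in> V G2 \<and> lab G1 x = lab G2 y \<and> i1 x = i2 y \<and> k1 x = k2 y"
| "same_view G1 i1 k1 G2 i2 k2 (Suc k) x y \<longleftrightarrow> same_view G1 i1 k1 G2 i2 k2 k x y \<and>
     (\<exists>f. bij_betw f (nbrs G1 x) (nbrs G2 y) \<and> (\<forall>v\<in>nbrs G1 x. same_view G1 i1 k1 G2 i2 k2 k v (f v)))"

lemma same_view_0: "same_view G1 i1 k1 G2 i2 k2 k x y \<Longrightarrow> same_view G1 i1 k1 G2 i2 k2 0 x y"
  by (induction k) auto

lemma same_view_mono: "same_view G1 i1 k1 G2 i2 k2 k x y \<Longrightarrow> j \<le> k \<Longrightarrow> same_view G1 i1 k1 G2 i2 k2 j x y"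
proof (induction k)
  case 0 then show ?case by simp
next
  case (Suc k) then show ?case by (cases "j = Suc k") auto
qed

lemma nbr_list_map:
  assumes g: "is_graph G1" "is_graph G2" "loc_unique G1 1 i1" "loc_unique G2 1 i2"
    and f: "bij_betw f (nbrs G1 x) (nbrs G2 y)" "\<forall>v\<in>nbrs G1 x. i2 (f v) = i1 v"
  shows "nbr_list G2 i2 y = map f (nbr_list G1 i1 x)"
proof -
  have p1: "set (nbr_list G1 i1 x) = nbrs G1 x" "sorted_wrt (\<lambda>a b. id_less (i1 a) (i1 b)) (nbr_list G1 i1 x)"
    using nbr_list_props[OF finite_nbrs inj_on_nbrs] g by blast+
  have "map i2 (map f (nbr_list G1 i1 x)) = map i1 (nbr_list G1 i1 x)"
    using f(2) p1(1) by auto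
  then have "sorted_wrt (\<lambda>a b. id_less (i2 a) (i2 b)) (map f (nbr_list G1 i1 x))"
    using p1(2) by (simp only: sorted_id_iff)
  moreover have "set (map f (nbr_list G1 i1 x)) = nbrs G2 y"
    using p1(1) f(1) by (simp add: bij_betw_def)
  ultimately show ?thesis
    using nbr_list_eq[OF finite_nbrs inj_on_nbrs] g by metis
qed

lemma set_nbr_list:
  assumes "is_graph G" "loc_unique G 1 i"
  shows "set (nbr_list G i u) = nbrs G u"
  using nbr_list_props[OF finite_nbrs[OF assms(1)] inj_on_nbrs[OF assms]] ..

lemma nbr_index_map:
  assumes "nbr_list G2 i2 u2 = map g (nbr_list G1 i1 u1)" "inj_on g (set (nbr_list G1 i1 u1))"
    and "x \<in> set (nbr_list G1 i1 u1)"
  shows "nbr_index G2 i2 u2 (g x) = nbr_index G1 i1 u1 x"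
proof -
  have "j < length (nbr_list G1 i1 u1) \<Longrightarrow> g (nbr_list G1 i1 u1 ! j) = g x \<longleftrightarrow> nbr_list G1 i1 u1 ! j = x" for j
    using assms(2,3) by (meson inj_onD nth_mem)
  then show ?thesis
    unfolding nbr_index_def assms(1) by (metis length_map nth_map)
qed

lemma same_view_Suc_nbr_list:
  assumes g: "is_graph G1" "is_graph G2" "loc_unique G1 1 i1" "loc_unique G2 1 i2"
    and view: "same_view G1 i1 k1 G2 i2 k2 (Suc k) x y"
  obtains f where "bij_betw f (nbrs G1 x) (nbrs G2 y)" "\<forall>v\<in>nbrs G1 x. same_view G1 i1 k1 G2 i2 k2 k v (f v)"
    "nbr_list G2 i2 y = map f (nbr_list G1 i1 x)"
proof -
  obtain f where f: "bij_betw f (nbrs G1 x) (nbrs G2 y)" "\<forall>v\<in>nbrs G1 x. same_view G1 i1 k1 G2 i2 k2 k v (f v)"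
    using view by (auto simp only: same_view.simps(2))
  have ids: "\<forall>v\<in>nbrs G1 x. i2 (f v) = i1 v"
    using f(2) same_view_0 by fastforce
  show ?thesis
    by (rule that[OF f nbr_list_map[OF g f(1) ids]])
qed

lemma piece_Nil: "piece [] j = []"
  by (simp add: piece_def tcontent_def bitsof_def)

lemma node_round_same_view:
  assumes g: "is_graph G1" "is_graph G2" "loc_unique G1 1 i1" "loc_unique G2 1 i2"
    and view: "same_view G1 i1 k1 G2 i2 k2 (Suc k) x y"
    and states: "\<forall>x y. same_view G1 i1 k1 G2 i2 k2 k x y \<longrightarrow> s1 x = s2 y"
    and silent: "k = 0 \<Longrightarrow> (\<forall>v. n_send (s1 v) = []) \<and> (\<forall>w. n_send (s2 w) = [])"
  shows "node_round M G1 i1 s1 x = node_round M G2 i2 s2 y"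
proof -
  let ?C = "same_view G1 i1 k1 G2 i2 k2"
  obtain f where f: "bij_betw f (nbrs G1 x) (nbrs G2 y)" "\<forall>v\<in>nbrs G1 x. ?C k v (f v)"
    and nl: "nbr_list G2 i2 y = map f (nbr_list G1 i1 x)"
    using same_view_Suc_nbr_list[OF g view] .
  have msg: "message G1 i1 s1 v x = message G2 i2 s2 (f v) y" if v: "v \<in> nbrs G1 x" for v
  proof (cases k)
    case 0
    then show ?thesis using silent by (simp add: message_def piece_Nil)
  next
    case (Suc k')
    have "?C (Suc k') v (f v)" using f(2) v Suc by blast
    then obtain g where gb: "bij_betw g (nbrs G1 v) (nbrs G2 (f v))" and gv: "\<forall>u\<in>nbrs G1 v. ?C k' u (g u)"
      and nl2: "nbr_list G2 i2 (f v) = map g (nbr_list G1 i1 v)"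
      by (rule same_view_Suc_nbr_list[OF g])
    have xv: "x \<in> nbrs G1 v" using nbrs_sym[OF g(1) v] .
    have "y \<in> nbrs G2 (f v)" using nbrs_sym[OF g(2)] f(1) v by (auto simp: bij_betw_def)
    moreover have "g x \<in> nbrs G2 (f v)" using gb xv by (auto simp: bij_betw_def)
    moreover have "i2 (g x) = i2 y" using gv xv same_view_0[OF view] same_view_0 by fastforce
    ultimately have "g x = y" using inj_on_nbrs[OF g(2,4)] by (auto dest: inj_onD)
    then have "nbr_index G2 i2 (f v) y = nbr_index G1 i1 v x"
      using nbr_index_map[OF nl2] gb xv set_nbr_list[OF g(1,3)] by (auto simp: bij_betw_def)
    moreover have "s1 v = s2 (f v)" using states f(2) v by blast
    ultimately show ?thesis by (simp add: message_def)
  qed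
  have "received G2 i2 s2 y = received G1 i1 s1 x"
    unfolding received_def nl map_map comp_def
    using msg set_nbr_list[OF g(1,3)] by (intro arg_cong[where f = concat] map_cong) simp_all
  moreover have "?C k x y" using view by simp
  then have "s1 x = s2 y" using states by blast
  ultimately show ?thesis by (simp add: node_round_def)
qed

lemma exec_same_view:
  assumes g: "is_graph G1" "is_graph G2" "loc_unique G1 1 i1" "loc_unique G2 1 i2"
    and all: "\<forall>x\<in>V G1. \<exists>y. same_view G1 i1 k1 G2 i2 k2 K x y"
  shows "k \<le> K \<Longrightarrow> exec M G2 i2 k2 k = Some s2 \<Longrightarrow>
     \<exists>s1. exec M G1 i1 k1 k = Some s1 \<and> (\<forall>x y. same_view G1 i1 k1 G2 i2 k2 k x y \<longrightarrow> s1 x = s2 y)"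
proof (induction k arbitrary: s2)
  case 0
  then show ?case by (auto simp: init_state_def)
next
  case (Suc k)
  let ?C = "same_view G1 i1 k1 G2 i2 k2"
  obtain t2 where t2: "exec M G2 i2 k2 k = Some t2" "do_round M G2 i2 t2 = Some s2"
    using Suc.prems by (auto split: option.splits)
  obtain t1 where t1: "exec M G1 i1 k1 k = Some t1" "\<forall>x y. ?C k x y \<longrightarrow> t1 x = t2 y"
    using Suc.IH[OF _ t2(1)] Suc.prems by auto
  have z: "k = 0 \<Longrightarrow> (\<forall>v. n_send (t1 v) = []) \<and> (\<forall>w. n_send (t2 w) = [])"
    using t1(1) t2(1) by (auto simp: init_state_def)
  have ne2: "\<forall>u\<in>V G2. node_round M G2 i2 t2 u \<noteq> None"
    and s2: "s2 = (\<lambda>u. if u \<in> V G2 then the (node_round M G2 i2 t2 u) else t2 u)"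
    using t2(2) by (auto simp: do_round_def split: if_splits)
  have eq: "node_round M G1 i1 t1 x = node_round M G2 i2 t2 y" if "?C (Suc k) x y" for x y
    by (rule node_round_same_view[OF g that t1(2) z])
  have ne1: "\<forall>u\<in>V G1. node_round M G1 i1 t1 u \<noteq> None"
  proof
    fix x assume x: "x \<in> V G1"
    obtain y where "?C K x y" using all x by blast
    then have cy: "?C (Suc k) x y" using same_view_mono Suc.prems by blast
    then have "y \<in> V G2" using same_view_0 by fastforce
    then show "node_round M G1 i1 t1 x \<noteq> None" using eq[OF cy] ne2 by simp
  qed
  let ?s1 = "\<lambda>u. if u \<in> V G1 then the (node_round M G1 i1 t1 u) else t1 u"
  have "exec M G1 i1 k1 (Suc k) = Some ?s1" using t1(1) ne1 by (simp add: do_round_def)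
  moreover have "\<forall>x y. ?C (Suc k) x y \<longrightarrow> ?s1 x = s2 y"
  proof (intro allI impI)
    fix x y assume cy: "?C (Suc k) x y"
    then have "x \<in> V G1" "y \<in> V G2" using same_view_0 by fastforce+
    then show "?s1 x = s2 y" using eq[OF cy] s2 by simp
  qed
  ultimately show ?case by blast
qed

lemma accepts_if_same_views:
  assumes g: "is_graph G1" "is_graph G2" "loc_unique G1 1 i1" "loc_unique G2 1 i2"
    and views: "\<forall>x\<in>V G1. \<exists>y. same_view G1 i1 k1 G2 i2 k2 c x y"
    and s2: "exec M G2 i2 k2 c = Some s2" "\<forall>u\<in>V G2. n_stopped (s2 u) \<and> bitsof (n_int (s2 u)) = [True]"
  shows "accepts M G1 i1 k1"
proof -
  obtain s1 where s1: "exec M G1 i1 k1 c = Some s1"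
    "\<forall>x y. same_view G1 i1 k1 G2 i2 k2 c x y \<longrightarrow> s1 x = s2 y"
    using exec_same_view[OF g views order_refl s2(1)] by blast
  have final: "n_stopped (s1 x) \<and> bitsof (n_int (s1 x)) = [True]" if x: "x \<in> V G1" for x
  proof -
    obtain y where view: "same_view G1 i1 k1 G2 i2 k2 c x y" using views x by blast
    then have "y \<in> V G2" using same_view_0[OF view] by simp
    moreover have "s1 x = s2 y" using s1(2) view by blast
    ultimately show ?thesis using s2(2) by simp
  qed
  show ?thesis
    unfolding accepts_def using s1(1) final by (intro exI[of _ c] exI[of _ s1]) auto
qed

lemma same_view_refl:
  assumes "is_graph G" "\<forall>x\<in>V G. k1 x = k2 x" "x \<in> V G"
  shows "same_view G i k1 G i k2 k x x"
  using assms(3)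
proof (induction k arbitrary: x)
  case 0
  then show ?case using assms(2) by simp
next
  case (Suc k)
  then show ?case
    using nbrs_in_V[OF assms(1)] bij_betw_id by fastforce
qed

lemma accepts_cert_cong:
  assumes "is_graph G" "loc_unique G 1 i" "\<forall>x\<in>V G. k1 x = k2 x" "accepts M G i k1"
  shows "accepts M G i k2"
proof -
  obtain k s where run: "exec M G i k1 k = Some s"
    and final: "\<forall>u\<in>V G. n_stopped (s u) \<and> bitsof (n_int (s u)) = [True]"
    using assms(4) by (auto simp: accepts_def)
  have "same_view G i k2 G i k1 k x x" if "x \<in> V G" for x
    using same_view_refl[OF assms(1) _ that] assms(3) by simp
  then have "\<forall>x\<in>V G. \<exists>y. same_view G i k2 G i k1 k x y" by blast
  from accepts_if_same_views[OF assms(1,1,2,2) this run final] show ?thesis .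
qed

lemma LP_subset_NLP: "LP \<subseteq> NLP"
proof
  fix P assume "P \<in> LP"
  then obtain M r_id where P: "graph_property P" and M: "local_poly M" "1 \<le> r_id"
    and decides: "\<forall>G\<in>GRAPH. \<forall>i. loc_unique G r_id i \<longrightarrow> (accepts M G i (\<lambda>_. []) \<longleftrightarrow> G \<in> P)"
    unfolding LP_def by blast
  text \<open>The zero polynomial only admits empty certificates.\<close>
  have "G \<in> P \<longleftrightarrow> (\<exists>\<kappa>. bounded_cert G i 1 0 \<kappa> \<and> accepts M G i \<kappa>)"
    if G: "G \<in> GRAPH" and i: "loc_unique G r_id i" for G i
  proof -
    have "is_graph G" "loc_unique G 1 i"
      using G loc_unique_mono[OF i M(2)] by (simp_all add: GRAPH_def)
    then have "accepts M G i \<kappa> \<longleftrightarrow> accepts M G i (\<lambda>_. [])" if "bounded_cert G i 1 0 \<kappa>" for \<kappa>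
      using that accepts_cert_cong[of G i \<kappa> "\<lambda>_. []" M] accepts_cert_cong[of G i "\<lambda>_. []" \<kappa> M]
      by (auto simp: bounded_cert_def)
    moreover have "bounded_cert G i 1 0 (\<lambda>_. [])"
      by (simp add: bounded_cert_def)
    ultimately show ?thesis
      using decides G i by blast
  qed
  then show "P \<in> NLP"
    unfolding NLP_def using P M by (intro CollectI conjI exI[of _ M] exI[of _ r_id] exI[of _ 1]
        exI[of _ "0 :: nat poly"]) auto
qed

section \<open>Cycles\<close>

definition cadd :: "nat \<Rightarrow> nat \<Rightarrow> int \<Rightarrow> nat" where
  "cadd n u s = nat ((int u + s) mod int n)"

definition cyc :: "nat \<Rightarrow> (nat \<Rightarrow> bool list) \<Rightarrow> lgraph" where
  "cyc n L = \<lparr>V = {..<n}, E = {(a, b). a < n \<and> b < n \<and> (b = cadd n a 1 \<or> a = cadd n b 1)},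
     lab = (\<lambda>u. if u < n then L u else [])\<rparr>"

lemma cadd_int: "0 < n \<Longrightarrow> int (cadd n u s) = (int u + s) mod int n"
  by (simp add: cadd_def)

lemma cadd_lt: "0 < n \<Longrightarrow> cadd n u s < n"
  unfolding cadd_def by (simp add: nat_less_iff)

lemma cadd_0: "u < n \<Longrightarrow> cadd n u 0 = u"
  unfolding cadd_def by simp

lemma cadd_cadd: "0 < n \<Longrightarrow> cadd n (cadd n u s) t = cadd n u (s + t)"
  unfolding cadd_def by (simp add: mod_add_left_eq add.assoc)

lemma cadd_inj:
  assumes n: "0 < n" and e: "cadd n u s = cadd n u t" and st: "\<bar>s - t\<bar> < int n"
  shows "s = t"
proof (rule ccontr)
  assume ne: "s \<noteq> t"
  have "int (cadd n u s) = int (cadd n u t)" using e by simp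
  then have "(int u + s) mod int n = (int u + t) mod int n" by (simp only: cadd_int[OF n])
  then have "int n dvd (int u + s) - (int u + t)" by (simp only: mod_eq_dvd_iff)
  then have "int n dvd (s - t)" by simp
  moreover have "s - t \<noteq> 0" using ne by simp
  ultimately have "\<bar>int n\<bar> \<le> \<bar>s - t\<bar>" by (rule dvd_imp_le_int[rotated])
  then show False using st by simp
qed

lemma cyc_V [simp]: "V (cyc n L) = {..<n}" by (simp add: cyc_def)
lemma cyc_lab: "u < n \<Longrightarrow> lab (cyc n L) u = L u" by (simp add: cyc_def)

lemma cyc_nbrs:
  assumes "0 < n" "u < n"
  shows "nbrs (cyc n L) u = {cadd n u 1, cadd n u (-1)}"
proof -
  have "v = cadd n u 1 \<or> u = cadd n v 1 \<longleftrightarrow> v = cadd n u 1 \<or> v = cadd n u (-1)" if v: "v < n" for v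
  proof -
    have "u = cadd n v 1 \<longleftrightarrow> v = cadd n u (-1)"
    proof
      assume "u = cadd n v 1"
      then show "v = cadd n u (-1)" using cadd_cadd[OF assms(1)] cadd_0[OF v] by simp
    next
      assume "v = cadd n u (-1)"
      then show "u = cadd n v 1" using cadd_cadd[OF assms(1)] cadd_0[OF assms(2)] by simp
    qed
    then show ?thesis by blast
  qed
  then show ?thesis using assms cadd_lt[OF assms(1)] by (auto simp: nbrs_def cyc_def)
qed

lemma cyc_E_iff: "(a, b) \<in> E (cyc n L) \<longleftrightarrow> a < n \<and> b \<in> nbrs (cyc n L) a"
  by (auto simp: nbrs_def cyc_def)

lemma cyc_dist:
  assumes n: "0 < n"
  shows "dist_le (cyc n L) k u v \<longleftrightarrow> u < n \<and> (\<exists>s. \<bar>s\<bar> \<le> int k \<and> v = cadd n u s)"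
proof (induction k arbitrary: v)
  case 0
  then show ?case using cadd_0 by auto
next
  case (Suc k)
  show ?case
  proof
    assume "dist_le (cyc n L) (Suc k) u v"
    then consider "dist_le (cyc n L) k u v" | w where "dist_le (cyc n L) k u w" "(w, v) \<in> E (cyc n L)"
      by auto
    then show "u < n \<and> (\<exists>s. \<bar>s\<bar> \<le> int (Suc k) \<and> v = cadd n u s)"
    proof cases
      case 1 then show ?thesis using Suc.IH by force
    next
      case 2
      then obtain s where s: "u < n" "\<bar>s\<bar> \<le> int k" "w = cadd n u s" using Suc.IH by blast
      have "w < n" using s cadd_lt[OF n] by simp
      then have "v = cadd n w 1 \<or> v = cadd n w (-1)" using 2(2) cyc_nbrs[OF n] by (auto simp: cyc_E_iff)
      then have "v = cadd n u (s + 1) \<or> v = cadd n u (s + -1)" using s cadd_cadd[OF n] by auto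
      moreover have "\<bar>s + 1\<bar> \<le> int (Suc k)" "\<bar>s + -1\<bar> \<le> int (Suc k)" using s(2) by auto
      ultimately show ?thesis using s(1) by blast
    qed
  next
    assume "u < n \<and> (\<exists>s. \<bar>s\<bar> \<le> int (Suc k) \<and> v = cadd n u s)"
    then obtain s where s: "u < n" "\<bar>s\<bar> \<le> int (Suc k)" "v = cadd n u s" by blast
    show "dist_le (cyc n L) (Suc k) u v"
    proof (cases "\<bar>s\<bar> \<le> int k")
      case True then show ?thesis using Suc.IH s by auto
    next
      case False
      define e where "e = (if 0 < s then 1 else -1 :: int)"
      have e: "e = 1 \<or> e = -1" "\<bar>s - e\<bar> \<le> int k"
        using False s(2) by (auto simp: e_def)
      let ?w = "cadd n u (s - e)"
      have dw: "dist_le (cyc n L) k u ?w" using Suc.IH s e by blast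
      have w: "?w < n" by (rule cadd_lt[OF n])
      have "v = cadd n ?w e" using cadd_cadd[OF n] s by simp
      then have "(?w, v) \<in> E (cyc n L)" using e(1) w cyc_nbrs[OF n w] by (auto simp: cyc_E_iff)
      then show ?thesis using dw by auto
    qed
  qed
qed

lemma cyc_ball:
  assumes "0 < n" "u < n"
  shows "{v. dist_le (cyc n L) k u v} = cadd n u ` {- int k..int k}"
  using cyc_dist[OF assms(1)] assms(2) by (auto simp: abs_le_iff)

lemma cyc_ball_sum:
  assumes "0 < n" "u < n" "2 * k < n"
  shows "(\<Sum>v\<in>{v. dist_le (cyc n L) k u v}. f v) = (\<Sum>s\<in>{- int k..int k}. f (cadd n u s))"
proof -
  have "inj_on (cadd n u) {- int k..int k}"
    by (rule inj_onI, rule cadd_inj[OF assms(1)]) (use assms(3) in auto)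
  then show ?thesis unfolding cyc_ball[OF assms(1,2)] by (simp add: sum.reindex)
qed

lemma cyc_two:
  assumes "3 \<le> n"
  shows "cadd n u 1 \<noteq> cadd n u (-1)"
  using cadd_inj[of n u 1 "-1"] assms by auto

lemma cyc_card_nbrs:
  assumes "3 \<le> n" "u < n"
  shows "card (nbrs (cyc n L) u) = 2"
  using cyc_nbrs[of n u L] assms cyc_two[OF assms(1)] by auto

lemma cyc_graph:
  assumes "3 \<le> n"
  shows "is_graph (cyc n L)"
proof -
  have n: "0 < n" using assms by simp
  have irr: "(u, u) \<notin> E (cyc n L)" for u
  proof
    assume "(u, u) \<in> E (cyc n L)"
    then have "u < n" "u = cadd n u 1" by (auto simp: cyc_def)
    then have "cadd n u 0 = cadd n u 1" using cadd_0 by simp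
    then show False using cadd_inj[OF n, of u 0 1] assms by auto
  qed
  have conn: "\<exists>k. dist_le (cyc n L) k u v" if "u < n" "v < n" for u v
  proof -
    have "cadd n u (int v - int u) = v" using that by (simp add: cadd_def)
    moreover have "\<bar>int v - int u\<bar> \<le> int n" using that by auto
    ultimately show ?thesis using cyc_dist[OF n] that by metis
  qed
  show ?thesis unfolding is_graph_def using irr conn assms
    by (auto simp: cyc_def lessThan_empty_iff)
qed

lemma same_view_cyc:
  assumes n: "3 \<le> n1" "3 \<le> n2"
    and "x < n1" "y < n2"
    and "\<And>s. \<bar>s\<bar> \<le> int k \<Longrightarrow> L1 (cadd n1 x s) = L2 (cadd n2 y s)
      \<and> i1 (cadd n1 x s) = i2 (cadd n2 y s) \<and> k1 (cadd n1 x s) = k2 (cadd n2 y s)"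
  shows "same_view (cyc n1 L1) i1 k1 (cyc n2 L2) i2 k2 k x y"
  using assms(3-5)
proof (induction k arbitrary: x y)
  case 0
  then show ?case using cadd_0[of x n1] cadd_0[of y n2] by (auto simp: cyc_lab)
next
  case (Suc k)
  have p: "0 < n1" "0 < n2" using n by auto
  let ?f = "\<lambda>v. if v = cadd n1 x 1 then cadd n2 y 1 else cadd n2 y (-1)"
  have ne: "cadd n1 x 1 \<noteq> cadd n1 x (-1)" "cadd n2 y 1 \<noteq> cadd n2 y (-1)"
    using cyc_two n by auto
  have bij: "bij_betw ?f (nbrs (cyc n1 L1) x) (nbrs (cyc n2 L2) y)"
    unfolding cyc_nbrs[OF p(1) Suc.prems(1)] cyc_nbrs[OF p(2) Suc.prems(2)] bij_betw_def
    using ne by (auto simp: inj_on_def)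
  have step: "same_view (cyc n1 L1) i1 k1 (cyc n2 L2) i2 k2 k (cadd n1 x e) (cadd n2 y e)"
    if e: "e = 1 \<or> e = -1" for e
  proof (rule Suc.IH)
    fix s :: int assume "\<bar>s\<bar> \<le> int k"
    then have "\<bar>e + s\<bar> \<le> int (Suc k)" using e by auto
    then show "L1 (cadd n1 (cadd n1 x e) s) = L2 (cadd n2 (cadd n2 y e) s)
        \<and> i1 (cadd n1 (cadd n1 x e) s) = i2 (cadd n2 (cadd n2 y e) s)
        \<and> k1 (cadd n1 (cadd n1 x e) s) = k2 (cadd n2 (cadd n2 y e) s)"
      using Suc.prems(3) cadd_cadd p by simp
  qed (use cadd_lt p in auto)
  have "\<forall>v\<in>nbrs (cyc n1 L1) x. same_view (cyc n1 L1) i1 k1 (cyc n2 L2) i2 k2 k v (?f v)"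
    unfolding cyc_nbrs[OF p(1) Suc.prems(1)] using step ne by auto
  moreover have "same_view (cyc n1 L1) i1 k1 (cyc n2 L2) i2 k2 k x y"
    using Suc by auto
  ultimately show ?case
    using bij by auto
qed

definition mod_ids :: "nat \<Rightarrow> nat \<Rightarrow> bool list" where
  "mod_ids m u = replicate (u mod m) True"

lemma cyc_loc_unique:
  assumes n: "3 \<le> n" and m: "m dvd n" "2 * r < m"
  shows "loc_unique (cyc n L) r (mod_ids m)"
  unfolding loc_unique_def
proof (intro ballI impI)
  fix u v assume uv: "u \<in> V (cyc n L)" "v \<in> V (cyc n L)" "u \<noteq> v \<and> dist_le (cyc n L) (2 * r) u v"
  have p: "0 < n" using n by simp
  obtain s where s: "\<bar>s\<bar> \<le> int (2 * r)" "v = cadd n u s" using uv cyc_dist[OF p] by blast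
  have "s \<noteq> 0" using s uv cadd_0 by auto
  have "int v mod int m = (int u + s) mod int m"
    using s(2) cadd_int[OF p] m(1) by (simp add: mod_mod_cancel)
  show "mod_ids m u \<noteq> mod_ids m v"
  proof
    assume "mod_ids m u = mod_ids m v"
    then have "u mod m = v mod m" by (simp add: mod_ids_def)
    then have "int u mod int m = int v mod int m" by (metis of_nat_mod)
    then have "int u mod int m = (int u + s) mod int m" using \<open>int v mod int m = (int u + s) mod int m\<close> by simp
    then have "int m dvd (int u + s) - int u" by (metis mod_eq_dvd_iff)
    then have "int m dvd s" by simp
    then have "\<bar>int m\<bar> \<le> \<bar>s\<bar>" using \<open>s \<noteq> 0\<close> by (rule dvd_imp_le_int[rotated])
    then show False using s(1) m(2) by linarith
  qed
qed

lemma cyc_in_GRAPH: "3 \<le> n \<Longrightarrow> cyc n L \<in> GRAPH"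
  by (simp add: GRAPH_def cyc_graph)

lemma cyc_in_GRAPH_deg:
  assumes "3 \<le> n" "3 \<le> D" "\<And>u. length (L u) \<le> 1"
  shows "cyc n L \<in> GRAPH_deg D"
proof -
  have "2 + length (L u) \<le> D" for u
    using assms(2) assms(3)[of u] by linarith
  then show ?thesis
    using cyc_in_GRAPH[OF assms(1)] cyc_card_nbrs[OF assms(1)] by (simp add: GRAPH_deg_def cyc_lab)
qed

lemma poly_nat_mono: "x \<le> y \<Longrightarrow> poly p x \<le> poly (p :: nat poly) y"
  by (induction p) (auto intro: add_mono mult_mono)

lemma cyc_cert_length_le:
  assumes "3 \<le> N" "2 * r < N" "0 < m" "u < N" "\<And>v. v < N \<Longrightarrow> length (L v) \<le> 1"
    and "bounded_cert (cyc N L) (mod_ids m) r p \<kappa>"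
  shows "length (\<kappa> u) \<le> poly p ((2 * r + 1) * (m + 2))"
proof -
  have N: "0 < N" using assms(1) by simp
  have card_r: "card {- int r..int r} = 2 * r + 1" by simp
  have weight: "1 + length (L (cadd N u s)) + length (mod_ids m (cadd N u s)) \<le> m + 2" for s
  proof -
    have "length (L (cadd N u s)) \<le> 1"
      using assms(5) cadd_lt[OF N] .
    moreover have "length (mod_ids m (cadd N u s)) \<le> m"
      using assms(3) by (simp add: mod_ids_def less_imp_le)
    ultimately show ?thesis by simp
  qed
  have "(\<Sum>v\<in>{v. dist_le (cyc N L) r u v}. 1 + length (lab (cyc N L) v) + length (mod_ids m v))
      = (\<Sum>s\<in>{- int r..int r}. 1 + length (L (cadd N u s)) + length (mod_ids m (cadd N u s)))"
    by (subst cyc_ball_sum[OF N assms(4,2)]) (simp add: cyc_lab cadd_lt[OF N])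
  also have "\<dots> \<le> card {- int r..int r} * (m + 2)"
    using sum_bounded_above[of "{- int r..int r}", OF weight] by simp
  also have "\<dots> = (2 * r + 1) * (m + 2)"
    using card_r by (simp only:)
  finally have "poly p (\<Sum>v\<in>{v. dist_le (cyc N L) r u v}. 1 + length (lab (cyc N L) v) + length (mod_ids m v))
      \<le> poly p ((2 * r + 1) * (m + 2))"
    by (rule poly_nat_mono)
  moreover have "length (\<kappa> u)
      \<le> poly p (\<Sum>v\<in>{v. dist_le (cyc N L) r u v}. 1 + length (lab (cyc N L) v) + length (mod_ids m v))"
    using assms(4,6) by (simp add: bounded_cert_def)
  ultimately show ?thesis
    by (rule order_trans[rotated])
qed

definition bounded_windows :: "nat \<Rightarrow> nat \<Rightarrow> bool list list set" where
  "bounded_windows B k = {ws. length ws = k \<and> (\<forall>w\<in>set ws. length w \<le> B)}"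

lemma finite_bounded_windows: "finite (bounded_windows B k)"
proof -
  have "finite {w :: bool list. length w \<le> B}"
    using finite_lists_length_le[of "UNIV :: bool set" B] by simp
  moreover have "bounded_windows B k = {ws. set ws \<subseteq> {w. length w \<le> B} \<and> length ws = k}"
    by (auto simp: bounded_windows_def)
  ultimately show ?thesis
    by (simp add: finite_lists_length_eq)
qed

lemma repeated_window:
  fixes \<kappa> :: "nat \<Rightarrow> bool list" and s :: "nat \<Rightarrow> nat"
  assumes "\<And>a j. a \<le> card (bounded_windows B k) \<Longrightarrow> j < k \<Longrightarrow> length (\<kappa> (s a + j)) \<le> B"
  obtains a b where "a < b" "b \<le> card (bounded_windows B k)" "\<And>j. j < k \<Longrightarrow> \<kappa> (s a + j) = \<kappa> (s b + j)"
proof -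
  let ?F = "card (bounded_windows B k)"
  define w where "w a = map (\<lambda>j. \<kappa> (s a + j)) [0..<k]" for a
  have "w ` {0..?F} \<subseteq> bounded_windows B k"
    using assms by (auto simp: w_def bounded_windows_def)
  then have "card (w ` {0..?F}) < card {0..?F}"
    using card_mono[OF finite_bounded_windows] by (simp add: le_imp_less_Suc)
  then obtain a b where "a \<in> {0..?F}" "b \<in> {0..?F}" "a \<noteq> b" "w a = w b"
    using pigeonhole unfolding inj_on_def by blast
  moreover have "\<kappa> (s a + j) = \<kappa> (s b + j)" if "w a = w b" "j < k" for a b j
    using that arg_cong[OF that(1), of "\<lambda>ws. ws ! j"] by (simp add: w_def)
  ultimately show ?thesis
    using that by (metis atLeastAtMost_iff linorder_neqE_nat)
qed

lemma mod_ids_add_dvd: "m dvd t \<Longrightarrow> mod_ids m (t + x) = mod_ids m x"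
  by (auto simp: mod_ids_def elim!: dvdE)

lemma cadd_shift_periodic:
  fixes f :: "nat \<Rightarrow> 'a"
  assumes "W < t" "t + n + W < N" "W < n" "x < n" "\<bar>s\<bar> \<le> int W"
    and periodic: "\<And>j. j \<le> 2 * W \<Longrightarrow> f (t - W + j) = f (t + n - W + j)"
  shows "f (t + cadd n x s) = f (cadd N (t + x) s)"
proof -
  have "int (cadd N (t + x) s) = int t + int x + s"
    using assms(1-5) by (simp add: cadd_def)
  then have long: "cadd N (t + x) s = nat (int t + int x + s)"
    by linarith
  have short: "int (cadd n x s) = (int x + s) mod int n"
    using assms(4) by (simp add: cadd_int)
  consider "0 \<le> int x + s" "int x + s < int n" | "int n \<le> int x + s" | "int x + s < 0"
    by linarith
  then show ?thesis
  proof cases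
    case 1
    then have "(int x + s) mod int n = int x + s"
      by (rule mod_pos_pos_trivial)
    then have "t + cadd n x s = cadd N (t + x) s"
      using short long by linarith
    then show ?thesis by simp
  next
    case 2
    then have "(int x + s) mod int n = (int x + s - int n) mod int n"
      using assms(4) by (intro mod_pos_geq) auto
    also have "\<dots> = int x + s - int n"
      using 2 assms(3,4,5) by (intro mod_pos_pos_trivial) auto
    finally have "t + cadd n x s = t - W + nat (int W + int x + s - int n)"
      using short 2 assms(1) by linarith
    moreover have "cadd N (t + x) s = t + n - W + nat (int W + int x + s - int n)"
      using long 2 assms(1) by linarith
    moreover have "nat (int W + int x + s - int n) \<le> 2 * W"
      using 2 assms(4,5) by linarith
    ultimately show ?thesis
      using periodic by simp
  next
    case 3
    have "(int x + s) mod int n = (int x + s + int n) mod int n"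
      by simp
    also have "\<dots> = int x + s + int n"
      using 3 assms(3,5) by (intro mod_pos_pos_trivial) auto
    finally have "t + cadd n x s = t + n - W + nat (int W + int x + s)"
      using short 3 assms(1,3,5) by linarith
    moreover have "cadd N (t + x) s = t - W + nat (int W + int x + s)"
      using long 3 assms(1,5) by linarith
    moreover have "nat (int W + int x + s) \<le> 2 * W"
      using 3 assms(5) by linarith
    ultimately show ?thesis
      using periodic by simp
  qed
qed

section \<open>Cutting a long cycle\<close>

text \<open>Cutting the stretch [t, t + n) out of the cycle Z/NZ and closing it up into Z/nZ: when the
  labels and certificates repeat with period n on the window of radius W around t and the
  identifiers have a period dividing n and t, no node of the short cycle can tell within W
  rounds that it is not on the long one.\<close>

locale cycle_cut =
  fixes m n t W N :: nat and L \<kappa> :: "nat \<Rightarrow> bool list"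
  assumes id_period: "3 \<le> m" "m dvd n" "m dvd t" "m dvd N"
    and window: "2 * W < n" "W < t" "t + n + W < N"
    and periodic: "\<And>j. j \<le> 2 * W \<Longrightarrow> L (t - W + j) = L (t + n - W + j) \<and> \<kappa> (t - W + j) = \<kappa> (t + n - W + j)"
begin

lemma cycle_sizes: "3 \<le> n" "3 \<le> N"
proof -
  show "3 \<le> n"
    using id_period window dvd_imp_le[of m n] by linarith
  then show "3 \<le> N"
    using window by linarith
qed

lemma shift_agrees:
  assumes "x < n" "\<bar>s\<bar> \<le> int W"
  shows "L (t + cadd n x s) = L (cadd N (t + x) s)"
    and "mod_ids m (cadd n x s) = mod_ids m (cadd N (t + x) s)"
    and "\<kappa> (t + cadd n x s) = \<kappa> (cadd N (t + x) s)"
proof -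
  have W: "W < n" using window by linarith
  show "L (t + cadd n x s) = L (cadd N (t + x) s)" "\<kappa> (t + cadd n x s) = \<kappa> (cadd N (t + x) s)"
    using cadd_shift_periodic[OF window(2,3) W assms] periodic by blast+
  have "mod_ids m (t - W + j) = mod_ids m (t + n - W + j)" for j
  proof -
    have "t + n - W + j = n + (t - W + j)" using window(2) by simp
    then show ?thesis by (simp only: mod_ids_add_dvd[OF id_period(2)])
  qed
  then have "mod_ids m (t + cadd n x s) = mod_ids m (cadd N (t + x) s)"
    using cadd_shift_periodic[OF window(2,3) W assms] by blast
  then show "mod_ids m (cadd n x s) = mod_ids m (cadd N (t + x) s)"
    by (simp add: mod_ids_add_dvd[OF id_period(3)])
qed

lemma same_view_cut:
  assumes "x < n" "k \<le> W"
  shows "same_view (cyc n (\<lambda>x. L (t + x))) (mod_ids m) (\<lambda>x. \<kappa> (t + x)) (cyc N L) (mod_ids m) \<kappa> k x (t + x)"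
  using assms shift_agrees window by (intro same_view_cyc cycle_sizes) auto

lemma bounded_cert_cut:
  assumes "r \<le> W" "bounded_cert (cyc N L) (mod_ids m) r p \<kappa>"
  shows "bounded_cert (cyc n (\<lambda>x. L (t + x))) (mod_ids m) r p (\<lambda>x. \<kappa> (t + x))"
  unfolding bounded_cert_def
proof
  fix x assume "x \<in> V (cyc n (\<lambda>x. L (t + x)))"
  then have x: "x < n" by simp
  have n: "0 < n" "2 * r < n" and N: "0 < N" "t + x < N" "2 * r < N"
    using x assms(1) window by linarith+
  let ?w = "\<lambda>G v. 1 + length (lab G v) + length (mod_ids m v)"
  have "?w (cyc n (\<lambda>x. L (t + x))) (cadd n x s) = ?w (cyc N L) (cadd N (t + x) s)"
    if "s \<in> {- int r..int r}" for s
  proof -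
    have "\<bar>s\<bar> \<le> int W" using that assms(1) by auto
    then show ?thesis
      using shift_agrees[OF x] cadd_lt[OF n(1)] cadd_lt[OF N(1)] by (simp add: cyc_lab)
  qed
  then have "(\<Sum>v\<in>{v. dist_le (cyc n (\<lambda>x. L (t + x))) r x v}. ?w (cyc n (\<lambda>x. L (t + x))) v)
      = (\<Sum>s\<in>{- int r..int r}. ?w (cyc N L) (cadd N (t + x) s))"
    by (subst cyc_ball_sum[OF n(1) x n(2)]) (rule sum.cong[OF refl])
  also have "\<dots> = (\<Sum>v\<in>{v. dist_le (cyc N L) r (t + x) v}. ?w (cyc N L) v)"
    by (rule cyc_ball_sum[OF N, symmetric])
  finally show "length (\<kappa> (t + x)) \<le> poly p (\<Sum>v\<in>{v. dist_le (cyc n (\<lambda>x. L (t + x))) r x v}.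
      ?w (cyc n (\<lambda>x. L (t + x))) v)"
    using assms(2) N(2) by (simp add: bounded_cert_def)
qed

lemma accepts_cut:
  assumes "c \<le> W" "accepts M (cyc N L) (mod_ids m) \<kappa>"
    and "exec M (cyc N L) (mod_ids m) \<kappa> c = Some s" "\<forall>u\<in>V (cyc N L). n_stopped (s u)"
  shows "accepts M (cyc n (\<lambda>x. L (t + x))) (mod_ids m) (\<lambda>x. \<kappa> (t + x))"
proof (rule accepts_if_same_views)
  show "is_graph (cyc n (\<lambda>x. L (t + x)))" "is_graph (cyc N L)"
    by (rule cyc_graph[OF cycle_sizes(1)], rule cyc_graph[OF cycle_sizes(2)])
  have "2 * 1 < m" using id_period(1) by simp
  then show "loc_unique (cyc n (\<lambda>x. L (t + x))) 1 (mod_ids m)" "loc_unique (cyc N L) 1 (mod_ids m)"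
    by (rule cyc_loc_unique[OF cycle_sizes(1) id_period(2)], rule cyc_loc_unique[OF cycle_sizes(2) id_period(4)])
  show "\<forall>x\<in>V (cyc n (\<lambda>x. L (t + x))). \<exists>y. same_view (cyc n (\<lambda>x. L (t + x))) (mod_ids m) (\<lambda>x. \<kappa> (t + x))
      (cyc N L) (mod_ids m) \<kappa> c x y"
    using same_view_cut assms(1) by auto
  show "exec M (cyc N L) (mod_ids m) \<kappa> c = Some s"
    by (fact assms(3))
  show "\<forall>u\<in>V (cyc N L). n_stopped (s u) \<and> bitsof (n_int (s u)) = [True]"
    using accepts_stopped_round[OF assms(2-4)] assms(4) by blast
qed

end

lemma long_cycle_cut:
  fixes \<kappa> :: "nat \<Rightarrow> bool list" and B W :: nat
  defines "F \<equiv> card (bounded_windows B (2 * W + 1))"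
  assumes m: "3 \<le> m" "2 * W < m" and N: "N = m * (2 * W + 2 + F)"
    and certs: "\<And>u. u < N \<Longrightarrow> length (\<kappa> u) \<le> B"
    and labels: "\<And>u. 0 < u \<Longrightarrow> L u = []"
  obtains n t where "cycle_cut m n t W N L \<kappa>"
proof -
  define t where "t a = m * (W + 1 + a)" for a
  have t: "W < t a" "t a + W < N" if "a \<le> F" for a
  proof -
    have "W + 1 \<le> m * (W + 1)" "m * (W + 1) \<le> t a" "t a + m * (W + 1) \<le> N"
      using m that by (simp_all add: t_def N algebra_simps)
    then show "W < t a" "t a + W < N" by linarith+
  qed
  obtain a b where ab: "a < b" "b \<le> F" and window: "\<And>j. j < 2 * W + 1 \<Longrightarrow> \<kappa> (t a - W + j) = \<kappa> (t b - W + j)"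
  proof (rule repeated_window[of B "2 * W + 1" \<kappa> "\<lambda>a. t a - W", folded F_def])
    fix a j assume "a \<le> F" "j < 2 * W + 1"
    then have "t a - W + j < N"
      using t[of a] by linarith
    then show "length (\<kappa> (t a - W + j)) \<le> B"
      by (rule certs)
  qed (rule that)
  have tb: "t b = t a + m * (b - a)"
    using ab by (simp add: t_def algebra_simps)
  have "cycle_cut m (m * (b - a)) (t a) W N L \<kappa>"
  proof
    show "3 \<le> m" "m dvd m * (b - a)" "m dvd t a" "m dvd N"
      using m by (simp_all add: t_def N)
    have "m \<le> m * (b - a)"
      using ab by (simp add: Suc_leI)
    then show "2 * W < m * (b - a)"
      using m by linarith
    show "W < t a" "t a + m * (b - a) + W < N"
      using t[of a] t[of b] ab tb by simp_all
    fix j assume "j \<le> 2 * W"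
    then show "L (t a - W + j) = L (t a + m * (b - a) - W + j)
        \<and> \<kappa> (t a - W + j) = \<kappa> (t a + m * (b - a) - W + j)"
      using window[of j] labels t[of a] ab tb by simp
  qed
  then show thesis by (rule that)
qed

lemma NLP_cycle_pumping:
  assumes "P \<in> NLP"
  obtains N where "3 \<le> N"
    and "\<And>L. (\<And>u. length (L u) \<le> 1) \<Longrightarrow> (\<And>u. 0 < u \<Longrightarrow> L u = [])
      \<Longrightarrow> cyc N L \<in> P \<Longrightarrow> \<exists>n\<ge>3. cyc n (\<lambda>_. []) \<in> P"
proof -
  obtain M r_id r p where M: "local_poly M" "1 \<le> r_id"
    and verifier: "\<forall>G\<in>GRAPH. \<forall>i. loc_unique G r_id i \<longrightarrow>
      (G \<in> P \<longleftrightarrow> (\<exists>\<kappa>. bounded_cert G i r p \<kappa> \<and> accepts M G i \<kappa>))"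
    using assms unfolding NLP_def by blast
  obtain c where stops: "\<And>G i \<kappa>. G \<in> GRAPH \<Longrightarrow> loc_unique G 1 i \<Longrightarrow>
      \<exists>s. exec M G i \<kappa> c = Some s \<and> (\<forall>u\<in>V G. n_stopped (s u))"
    using local_poly_stops[OF M(1)] by metis
  define W where "W = c + r"
  define m where "m = 2 * r_id + 2 * W + 3"
  define B where "B = poly p ((2 * r + 1) * (m + 2))"
  define N where "N = m * (2 * W + 2 + card (bounded_windows B (2 * W + 1)))"
  have m: "3 \<le> m" "2 * r_id < m" "2 * W < m"
    by (simp_all add: m_def)
  have mN: "m \<le> N" "m dvd N"
    by (simp_all add: N_def)
  have "2 * r < m"
    using m(3) by (simp add: W_def)
  then have N: "3 \<le> N" "m dvd N" "2 * r < N"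
    using m(1) mN by simp_all
  have "\<exists>n\<ge>3. cyc n (\<lambda>_. []) \<in> P"
    if short_labels: "\<And>u. length (L u) \<le> 1" and labels: "\<And>u. 0 < u \<Longrightarrow> L u = []"
      and long: "cyc N L \<in> P" for L
  proof -
    obtain \<kappa> where cert: "bounded_cert (cyc N L) (mod_ids m) r p \<kappa>"
      and acc: "accepts M (cyc N L) (mod_ids m) \<kappa>"
      using verifier[rule_format, OF cyc_in_GRAPH[OF N(1)] cyc_loc_unique[OF N(1,2) m(2)]] long by blast
    have certs: "length (\<kappa> u) \<le> B" if "u < N" for u
      using cyc_cert_length_le[OF N(1,3) _ that short_labels cert] m by (simp add: B_def)
    obtain n t where "cycle_cut m n t W N L \<kappa>"
      by (rule long_cycle_cut[OF m(1,3) N_def certs labels])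
    then interpret cycle_cut m n t W N L \<kappa> .
    obtain s where run: "exec M (cyc N L) (mod_ids m) \<kappa> c = Some s" "\<forall>u\<in>V (cyc N L). n_stopped (s u)"
      using stops[OF cyc_in_GRAPH[OF N(1)] loc_unique_mono[OF cyc_loc_unique[OF N(1,2) m(2)] M(2)]] by blast
    have "accepts M (cyc n (\<lambda>x. L (t + x))) (mod_ids m) (\<lambda>x. \<kappa> (t + x))"
      by (rule accepts_cut[OF _ acc run]) (simp add: W_def)
    moreover have "bounded_cert (cyc n (\<lambda>x. L (t + x))) (mod_ids m) r p (\<lambda>x. \<kappa> (t + x))"
      by (rule bounded_cert_cut[OF _ cert]) (simp add: W_def)
    ultimately have "cyc n (\<lambda>x. L (t + x)) \<in> P"
      using verifier[rule_format, OF cyc_in_GRAPH[OF cycle_sizes(1)]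
          cyc_loc_unique[OF cycle_sizes(1) id_period(2) m(2)]] by blast
    moreover have "(\<lambda>x. L (t + x)) = (\<lambda>_. [])"
      using labels window by auto
    ultimately show ?thesis
      using cycle_sizes by auto
  qed
  with N(1) show thesis
    by (rule that)
qed

section \<open>A property in LP whose complement is not in NLP\<close>

definition all_labels_empty :: "lgraph set" where
  "all_labels_empty = {G \<in> GRAPH. \<forall>u\<in>V G. lab G u = []}"

lemma graph_property_all_labels_empty: "graph_property all_labels_empty"
  unfolding graph_property_def
proof (intro conjI ballI impI)
  show "all_labels_empty \<subseteq> GRAPH"
    by (auto simp: all_labels_empty_def)
  fix G H assume G: "G \<in> all_labels_empty" and H: "H \<in> GRAPH" and "graph_iso G H"
  then obtain f where f: "bij_betw f (V G) (V H)" "\<forall>u\<in>V G. lab H (f u) = lab G u"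
    by (auto simp: graph_iso_def)
  have "lab H v = []" if v: "v \<in> V H" for v
  proof -
    obtain u where "u \<in> V G" "v = f u"
      using v f(1) by (auto simp: bij_betw_def)
    then show ?thesis
      using f(2) G by (simp add: all_labels_empty_def)
  qed
  then show "H \<in> all_labels_empty"
    using H by (simp add: all_labels_empty_def)
qed

lemma all_labels_empty_LP: "all_labels_empty \<in> LP"
proof -
  have "\<forall>G\<in>GRAPH. \<forall>i. loc_unique G 1 i \<longrightarrow>
      (accepts empty_label_tm G i (\<lambda>_. []) \<longleftrightarrow> G \<in> all_labels_empty)"
    by (simp add: accepts_empty_label_tm all_labels_empty_def)
  then show ?thesis
    unfolding LP_def using graph_property_all_labels_empty local_poly_empty_label_tm by blast
qed

lemma cyc_all_labels_empty_iff:
  assumes "3 \<le> n"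
  shows "cyc n L \<in> all_labels_empty \<longleftrightarrow> (\<forall>u<n. L u = [])"
  using cyc_in_GRAPH[OF assms] by (simp add: all_labels_empty_def cyc_lab Ball_def)

lemma NLP_disagrees_with_nonempty_label:
  assumes D: "3 \<le> D" and P: "P \<in> NLP"
  shows "P \<inter> GRAPH_deg D \<noteq> (GRAPH - all_labels_empty) \<inter> GRAPH_deg D"
proof
  assume agree: "P \<inter> GRAPH_deg D = (GRAPH - all_labels_empty) \<inter> GRAPH_deg D"
  obtain N where N: "3 \<le> N" and pump: "\<And>L. (\<And>u. length (L u) \<le> 1) \<Longrightarrow> (\<And>u. 0 < u \<Longrightarrow> L u = [])
      \<Longrightarrow> cyc N L \<in> P \<Longrightarrow> \<exists>n\<ge>3. cyc n (\<lambda>_. []) \<in> P"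
    using NLP_cycle_pumping[OF P] by metis
  define L where "L u = (if u = 0 then [True] else [])" for u :: nat
  have short_labels: "length (L u) \<le> 1" and labels: "0 < u \<Longrightarrow> L u = []" for u
    by (simp_all add: L_def)
  have "cyc N L \<in> GRAPH_deg D" "cyc N L \<notin> all_labels_empty"
    using N D cyc_in_GRAPH_deg short_labels cyc_all_labels_empty_iff[OF N] by (auto simp: L_def)
  then have "cyc N L \<in> P \<inter> GRAPH_deg D"
    unfolding agree using cyc_in_GRAPH[OF N] by simp
  then obtain n where n: "3 \<le> n" "cyc n (\<lambda>_. []) \<in> P"
    using pump[of L, OF short_labels labels] by blast
  then have "cyc n (\<lambda>_. []) \<in> P \<inter> GRAPH_deg D"
    using D by (simp add: cyc_in_GRAPH_deg)
  then have "cyc n (\<lambda>_. []) \<notin> all_labels_empty"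
    unfolding agree by simp
  then show False
    using cyc_all_labels_empty_iff[OF n(1)] by simp
qed

lemma restrict_class_mono: "C \<subseteq> C' \<Longrightarrow> restrict_class C B \<subseteq> restrict_class C' B"
  by (auto simp: restrict_class_def)

lemma GRAPH_minus_all_labels_empty_coLP: "GRAPH - all_labels_empty \<in> coLP"
  unfolding coLP_def using all_labels_empty_LP by (intro CollectI exI[of _ all_labels_empty]) simp

theorem proposition9p3:
  shows "(\<forall>D::nat. D \<ge> 3 \<longrightarrow>
            \<not> restrict_class coLP (GRAPH_deg D) \<subseteq> restrict_class NLP (GRAPH_deg D)
          \<and> \<not> restrict_class NLP (GRAPH_deg D) \<subseteq> restrict_class coLP (GRAPH_deg D))
        \<and> \<not> coLP \<subseteq> NLP \<and> \<not> NLP \<subseteq> coLP"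
proof -
  have separated: "\<not> restrict_class coLP (GRAPH_deg D) \<subseteq> restrict_class NLP (GRAPH_deg D)
      \<and> \<not> restrict_class NLP (GRAPH_deg D) \<subseteq> restrict_class coLP (GRAPH_deg D)" if D: "3 \<le> D" for D
  proof (intro conjI notI)
    assume "restrict_class coLP (GRAPH_deg D) \<subseteq> restrict_class NLP (GRAPH_deg D)"
    then have "(GRAPH - all_labels_empty) \<inter> GRAPH_deg D \<in> restrict_class NLP (GRAPH_deg D)"
      using GRAPH_minus_all_labels_empty_coLP by (auto simp: restrict_class_def)
    then show False
      using NLP_disagrees_with_nonempty_label[OF D] by (auto simp: restrict_class_def)
  next
    assume "restrict_class NLP (GRAPH_deg D) \<subseteq> restrict_class coLP (GRAPH_deg D)"
    then have "all_labels_empty \<inter> GRAPH_deg D \<in> restrict_class coLP (GRAPH_deg D)"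
      using LP_subset_NLP all_labels_empty_LP by (auto simp: restrict_class_def)
    then obtain Q where "Q \<in> LP" "(GRAPH - Q) \<inter> GRAPH_deg D = all_labels_empty \<inter> GRAPH_deg D"
      by (auto simp: restrict_class_def coLP_def)
    moreover from this(2) have "Q \<inter> GRAPH_deg D = (GRAPH - all_labels_empty) \<inter> GRAPH_deg D"
      by (auto simp: GRAPH_deg_def)
    ultimately show False
      using NLP_disagrees_with_nonempty_label[OF D] LP_subset_NLP by auto
  qed
  then show ?thesis
    using restrict_class_mono[of coLP NLP "GRAPH_deg 3"] restrict_class_mono[of NLP coLP "GRAPH_deg 3"]
    by auto
qed

end
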